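(* Fix an integer $m>1$. Let $\{z_n\}$ be generated by $\mathcal{S}(\kappa,\Phi)$ with $\kappa$ satisfying $\sum_{n}\rho^{\kappa(n)}=\infty$ for all $0<\rho\le1$ and $\Phi(x,S)=d(x,S)=\inf_{s\in S}d(x,s)$, and let $\zeta_n$ now denote the $m$ nearest neighbors prediction $\zeta_n(x)=\operatorname{mode}_f(U_{Z_n}(x))$. If $x\in\operatorname{supp}(\mu)$ is not an $f$-boundary point, then $\zeta_n(x)\to f(x)$ with probability one.
   Context: $(X,d)$ metric space with probability measure $\mu$; $Y$ countable; $f:X\to Y$; $X_y=f^{-1}(y)$; $B_\epsilon(x)$ open ball; $\operatorname{supp}(\mu)=\{x:\mu(B_\epsilon(x))>0\ \forall\epsilon>0\}$. $b$ is an $f$-boundary point iff $\mu(B_\epsilon(b)\setminus X_{f(b)})>0$ for all $\epsilon>0$. Process $\mathcal{S}(\kappa,\Phi)$: $Z_0=\emptyset$; at step $n$ draw $\kappa(n)$ candidates i.i.d. from $\mu$, independent of the past; $z_n$ maximizes $\Phi(\cdot,Z_{n-1})$ over candidates (ties uniformly at random); $Z_n=\{z_1,\dots,z_n\}$. For finite $A$, $\operatorname{modefreq}_f(A)=\max_y|A\cap X_y|$ and $\operatorname{mode}_f(A)$ is a value $y$ attaining this maximum (ties uniformly at random). $m$ nearest neighbors: for $S\subseteq X$ let $\mathcal{U}_x$ be the family of $m$-element subsets of $S$ minimizing distance to $x$; $U_S(x)=\{x\}$ if $x\in S$, otherwise $U_S(x)=\arg\min_{U\in\mathcal{U}_x}\operatorname{modefreq}_f(U)$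 (for $n<m$, use all of $Z_n$). *)

theory Defs
  imports "HOL-Probability.Probability"
begin

definition in_supp :: "'a::metric_space measure \<Rightarrow> 'a \<Rightarrow> bool" where
  "in_supp \<mu> x \<longleftrightarrow> (\<forall>\<epsilon>>0. measure \<mu> (ball x \<epsilon>) > 0)"

definition is_f_boundary :: "'a::metric_space measure \<Rightarrow> ('a \<Rightarrow> 'b) \<Rightarrow> 'a \<Rightarrow> bool" where
  "is_f_boundary \<mu> f b \<longleftrightarrow> (\<forall>\<epsilon>>0. measure \<mu> (ball b \<epsilon> - f -` {f b}) > 0)"

text \<open>Given a finite set A and a number v (uniform on [0,1)), pick the element
  of index floor(v * card A) under a fixed enumeration of A; this is a uniformly
  random element of A when v is uniform on [0,1).\<close>

definition unif_pick :: "'b set \<Rightarrow> real \<Rightarrow> 'b" where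
  "unif_pick A v = (SOME e. bij_betw e {..<card A} A) (nat \<lfloor>v * real (card A)\<rfloor>)"

definition unif01 :: "real measure" where
  "unif01 = uniform_measure lborel {0..<1}"

text \<open>Randomness: C k j is the j-th candidate drawn at step k (only j < kappa k are used),
  T k i are independent uniform [0,1) tie-breaking variables:
  T k 0 for the selection at step k, T k 1 for the choice of the neighbour set
  and T k 2 for the mode in the prediction at time k.\<close>

definition sample_space :: "'a measure \<Rightarrow> ((nat \<Rightarrow> nat \<Rightarrow> 'a) \<times> (nat \<Rightarrow> nat \<Rightarrow> real)) measure" where
  "sample_space \<mu> = (PiM UNIV (\<lambda>_::nat. PiM UNIV (\<lambda>_::nat. \<mu>)))
       \<Otimes>\<^sub>M (PiM UNIV (\<lambda>_::nat. PiM UNIV (\<lambda>_::nat. unif01)))"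

definition maximizers :: "(nat \<Rightarrow> nat) \<Rightarrow> ('a \<Rightarrow> 'a set \<Rightarrow> real) \<Rightarrow> (nat \<Rightarrow> nat \<Rightarrow> 'a) \<Rightarrow> nat \<Rightarrow> 'a set \<Rightarrow> nat set" where
  "maximizers \<kappa> \<Phi> C k Z = {j. j < \<kappa> k \<and> (\<forall>i<\<kappa> k. \<Phi> (C k i) Z \<le> \<Phi> (C k j) Z)}"

primrec Zlist :: "(nat \<Rightarrow> nat) \<Rightarrow> ('a \<Rightarrow> 'a set \<Rightarrow> real) \<Rightarrow> (nat \<Rightarrow> nat \<Rightarrow> 'a) \<Rightarrow> (nat \<Rightarrow> nat \<Rightarrow> real) \<Rightarrow> nat \<Rightarrow> 'a list" where
  "Zlist \<kappa> \<Phi> C T 0 = []"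
| "Zlist \<kappa> \<Phi> C T (Suc n) =
     Zlist \<kappa> \<Phi> C T n @
       [C (Suc n) (unif_pick (maximizers \<kappa> \<Phi> C (Suc n) (set (Zlist \<kappa> \<Phi> C T n))) (T (Suc n) 0))]"

definition Zset :: "(nat \<Rightarrow> nat) \<Rightarrow> ('a \<Rightarrow> 'a set \<Rightarrow> real) \<Rightarrow> (nat \<Rightarrow> nat \<Rightarrow> 'a) \<Rightarrow> (nat \<Rightarrow> nat \<Rightarrow> real) \<Rightarrow> nat \<Rightarrow> 'a set" where
  "Zset \<kappa> \<Phi> C T n = set (Zlist \<kappa> \<Phi> C T n)"

definition modefreq :: "('a \<Rightarrow> 'b) \<Rightarrow> 'a set \<Rightarrow> nat" where
  "modefreq f A = Max ((\<lambda>y. card (A \<inter> f -` {y})) ` f ` A)"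

definition modes :: "('a \<Rightarrow> 'b) \<Rightarrow> 'a set \<Rightarrow> 'b set" where
  "modes f A = {y \<in> f ` A. card (A \<inter> f -` {y}) = modefreq f A}"

definition mode_f :: "('a \<Rightarrow> 'b) \<Rightarrow> 'a set \<Rightarrow> real \<Rightarrow> 'b" where
  "mode_f f A v = unif_pick (modes f A) v"

definition nn_family :: "nat \<Rightarrow> 'a::metric_space set \<Rightarrow> 'a \<Rightarrow> 'a set set" where
  "nn_family m S x = {U. U \<subseteq> S \<and> card U = m \<and> (\<forall>u\<in>U. \<forall>s\<in>S - U. dist x u \<le> dist x s)}"

definition nn_worst :: "nat \<Rightarrow> ('a::metric_space \<Rightarrow> 'b) \<Rightarrow> 'a set \<Rightarrow> 'a \<Rightarrow> 'a set set" where
  "nn_worst m f S x = {U \<in> nn_family m S x. \<forall>U'\<in>nn_family m S x. modefreq f U \<le> modefreq f U'}"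

definition U_nn :: "nat \<Rightarrow> ('a::metric_space \<Rightarrow> 'b) \<Rightarrow> 'a set \<Rightarrow> 'a \<Rightarrow> real \<Rightarrow> 'a set" where
  "U_nn m f S x v =
     (if x \<in> S then {x}
      else if card S \<le> m then S
      else unif_pick (nn_worst m f S x) v)"

definition zeta_nn :: "nat \<Rightarrow> ('a::metric_space \<Rightarrow> 'b) \<Rightarrow> (nat \<Rightarrow> nat) \<Rightarrow> ('a \<Rightarrow> 'a set \<Rightarrow> real)
    \<Rightarrow> nat \<Rightarrow> 'a \<Rightarrow> (nat \<Rightarrow> nat \<Rightarrow> 'a) \<times> (nat \<Rightarrow> nat \<Rightarrow> real) \<Rightarrow> 'b" where
  "zeta_nn m f \<kappa> \<Phi> n x \<omega> =
     (let C = fst \<omega>; T = snd \<omega>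
      in mode_f f (U_nn m f (Zset \<kappa> \<Phi> C T n) x (T n 1)) (T n 2))"

end

theory Submission
  imports Defs
begin

text \<open>
  Since \<open>x\<close> is not an \<open>f\<close>-boundary point, almost surely every candidate that ever falls
  into a small ball \<open>B(x, \<epsilon>)\<close> carries the label \<open>f x\<close>. Since \<open>x\<close> lies in the support and
  \<open>\<Sum>\<^sub>n \<rho>^\<kappa>(n)\<close> diverges, the second Borel--Cantelli lemma shows that for every \<open>\<delta> > 0\<close>
  infinitely many whole batches of candidates fall into \<open>B(x, \<delta>)\<close>; whatever the selection
  criterion \<open>\<Phi>\<close>, the point selected from such a batch lies within \<open>\<delta>\<close> of \<open>x\<close>. Taking \<open>\<delta>\<close>
  below the distance from \<open>x\<close> to the points selected so far, the selected set eventually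
  contains \<open>x\<close> or more than \<open>m\<close> points of \<open>B(x, \<epsilon>)\<close>. From then on all \<open>m\<close> nearest
  neighbours of \<open>x\<close> lie in \<open>B(x, \<epsilon>)\<close>, so they all carry the label \<open>f x\<close>, and so does
  their mode, however ties are broken.
\<close>

lemma unif_pick_in:
  assumes "finite A" "A \<noteq> {}" "0 \<le> v" "v < 1"
  shows "unif_pick A v \<in> A"
proof -
  obtain e where e: "bij_betw e {..<card A} A"
    using ex_bij_betw_nat_finite[OF assms(1)] by (auto simp: atLeast0LessThan)
  then have bij: "bij_betw (SOME e. bij_betw e {..<card A} A) {..<card A} A"
    by (rule someI[where x = e])
  have "0 < card A" using assms(1,2) by auto
  then have "nat \<lfloor>v * real (card A)\<rfloor> < card A"
    using assms(3,4) by (simp add: floor_less_iff nat_less_iff)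
  then show ?thesis
    unfolding unif_pick_def using bij_betw_apply[OF bij] by simp
qed

lemma prob_space_unif01: "prob_space unif01"
  unfolding unif01_def by (rule prob_space_uniform_measure) simp_all

lemma AE_unif01: "AE v in unif01. 0 \<le> v \<and> v < 1"
  unfolding unif01_def by (subst AE_uniform_measure) simp_all

lemma (in product_prob_space) measure_PiM_Collect:
  assumes "J \<subseteq> I" "finite J" "\<And>i. i \<in> J \<Longrightarrow> X i \<in> sets (M i)"
  shows "measure (Pi\<^sub>M I M) {x\<in>space (Pi\<^sub>M I M). \<forall>i\<in>J. x i \<in> X i} = (\<Prod>i\<in>J. measure (M i) (X i))"
proof -
  have "{x\<in>space (Pi\<^sub>M I M). \<forall>i\<in>J. x i \<in> X i} = emb I J (Pi\<^sub>E J X)"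
    unfolding prod_emb_def using assms by (auto simp: space_PiM Pi_iff)
  with measure_PiM_emb[OF assms] show ?thesis by simp
qed

lemma not_summable_tail_sums_unbounded:
  fixes p :: "nat \<Rightarrow> real"
  assumes nonneg: "\<And>k. 0 \<le> p k" and "\<not> summable p"
  shows "\<exists>K. B < (\<Sum>k=N..K. p k)"
proof (rule ccontr)
  assume "\<nexists>K. B < (\<Sum>k=N..K. p k)"
  then have bounded: "(\<Sum>k=N..K. p k) \<le> B" for K
    by (simp add: not_less)
  have "(\<Sum>k<K. p k) \<le> (\<Sum>k<N. p k) + B" for K
  proof -
    have "(\<Sum>k<K. p k) \<le> (\<Sum>k\<in>{..<N} \<union> {N..K}. p k)"
      by (intro sum_mono2) (auto simp: nonneg)
    also have "\<dots> = (\<Sum>k<N. p k) + (\<Sum>k=N..K. p k)"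
      by (rule sum.union_disjoint) auto
    finally show ?thesis using bounded[of K] by simp
  qed
  then have "summable p"
    by (intro summableI_nonneg_bounded[OF nonneg])
  with \<open>\<not> summable p\<close> show False ..
qed

lemma prod_one_minus_le_exp_neg_sum:
  fixes p :: "'a \<Rightarrow> real"
  assumes "\<And>k. k \<in> K \<Longrightarrow> p k \<le> 1"
  shows "(\<Prod>k\<in>K. 1 - p k) \<le> exp (- (\<Sum>k\<in>K. p k))"
proof (cases "finite K")
  case True
  have "(\<Prod>k\<in>K. 1 - p k) \<le> (\<Prod>k\<in>K. exp (- p k))"
    using assms exp_ge_add_one_self[of "- p _"] by (intro prod_mono) auto
  also have "\<dots> = exp (- (\<Sum>k\<in>K. p k))"
    using exp_sum[OF True, of "\<lambda>k. - p k"] by (simp add: sum_negf)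
  finally show ?thesis .
qed simp

lemma AE_PiM_frequently_not_summable:
  fixes M :: "'a measure" and A :: "nat \<Rightarrow> 'a set"
  assumes M: "prob_space M" and A: "\<And>k. A k \<in> sets M"
    and diverges: "\<not> summable (\<lambda>k. measure M (A k))"
  shows "AE \<omega> in PiM UNIV (\<lambda>_::nat. M). \<exists>\<^sub>F k in sequentially. \<omega> k \<in> A k"
proof -
  interpret M: prob_space M by (rule M)
  interpret product_prob_space "\<lambda>_::nat. M" UNIV
    by (rule product_prob_spaceI) (rule M)
  let ?P = "PiM UNIV (\<lambda>_::nat. M)"
  interpret P: prob_space ?P
    by (rule prob_space_PiM) (rule M)
  define miss where "miss K = {\<omega>\<in>space ?P. \<forall>k\<in>K. \<omega> k \<in> space M - A k}" for K
  have miss_sets: "miss K \<in> sets ?P" for K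
    unfolding miss_def
    by (intro sets.sets_Collect_countable_All' sets_Collect_single) (auto simp: A)
  have miss_null: "miss {N..} \<in> null_sets ?P" for N
  proof -
    have "measure ?P (miss {N..}) \<le> 0 + \<eta>" if "0 < \<eta>" for \<eta>
    proof -
      obtain K where K: "- ln \<eta> < (\<Sum>k=N..K. measure M (A k))"
        using not_summable_tail_sums_unbounded[OF measure_nonneg diverges] by blast
      have "measure ?P (miss {N..}) \<le> measure ?P (miss {N..K})"
        using miss_sets by (intro P.finite_measure_mono) (auto simp: miss_def)
      also have "\<dots> = (\<Prod>k=N..K. 1 - measure M (A k))"
        unfolding miss_def by (subst measure_PiM_Collect) (auto simp: M.prob_compl A)
      also have "\<dots> \<le> exp (- (\<Sum>k=N..K. measure M (A k)))"
        by (rule prod_one_minus_le_exp_neg_sum) simp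
      also have "\<dots> < exp (ln \<eta>)"
        using K by simp
      also have "\<dots> = \<eta>"
        using that by simp
      finally show ?thesis by simp
    qed
    then have "measure ?P (miss {N..}) \<le> 0"
      by (rule field_le_epsilon)
    then show ?thesis
      using miss_sets by (simp add: measure_le_0_iff null_sets_def P.emeasure_eq_measure)
  qed
  have "{\<omega>\<in>space ?P. \<not> (\<exists>\<^sub>F k in sequentially. \<omega> k \<in> A k)} \<subseteq> (\<Union>N. miss {N..})"
    by (auto simp: miss_def not_frequently eventually_sequentially space_PiM)
  then show ?thesis
    by (rule AE_I'[OF null_sets_UN[OF miss_null]])
qed

lemma measure_PiM_batch:
  assumes "prob_space \<mu>" "B \<in> sets \<mu>"
  shows "measure (PiM UNIV (\<lambda>_::nat. \<mu>)) {c\<in>space (PiM UNIV (\<lambda>_::nat. \<mu>)). \<forall>j\<in>{..<n}. c j \<in> B}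
    = measure \<mu> B ^ n"
proof -
  interpret product_prob_space "\<lambda>_::nat. \<mu>" UNIV
    by (rule product_prob_spaceI) (rule assms(1))
  show ?thesis
    using measure_PiM_Collect[of "{..<n}" "\<lambda>_. B"] assms(2) by simp
qed

lemma AE_frequently_batch_in:
  fixes \<kappa> :: "nat \<Rightarrow> nat"
  assumes \<mu>: "prob_space \<mu>" and B: "B \<in> sets \<mu>"
    and diverges: "\<not> summable (\<lambda>k. measure \<mu> B ^ \<kappa> k)"
  shows "AE C in PiM UNIV (\<lambda>_::nat. PiM UNIV (\<lambda>_::nat. \<mu>)).
           \<exists>\<^sub>F k in sequentially. \<forall>j<\<kappa> k. C k j \<in> B"
proof -
  let ?row = "PiM UNIV (\<lambda>_::nat. \<mu>)"
  define A where "A k = {c\<in>space ?row. \<forall>j\<in>{..<\<kappa> k}. c j \<in> B}" for k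
  have A_sets: "A k \<in> sets ?row" for k
    unfolding A_def using B
    by (intro sets.sets_Collect_finite_All sets_Collect_single) auto
  have "AE C in PiM UNIV (\<lambda>_::nat. ?row). \<exists>\<^sub>F k in sequentially. C k \<in> A k"
    using diverges measure_PiM_batch[OF \<mu> B]
    by (intro AE_PiM_frequently_not_summable prob_space_PiM \<mu> A_sets) (simp add: A_def)
  then show ?thesis
    by eventually_elim (auto elim: frequently_elim1 simp: A_def)
qed

lemma AE_PiM_PiM_all:
  assumes "prob_space \<mu>" "AE y in \<mu>. P y"
  shows "AE C in PiM UNIV (\<lambda>_::nat. PiM UNIV (\<lambda>_::nat. \<mu>)). \<forall>k j. P (C k j)"
proof -
  have row: "prob_space (PiM UNIV (\<lambda>_::nat. \<mu>))"
    by (rule prob_space_PiM) (rule assms(1))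
  have "AE c in PiM UNIV (\<lambda>_::nat. \<mu>). P (c j)" for j
    using AE_PiM_component[of UNIV "\<lambda>_. \<mu>" j P] assms by simp
  then have "AE C in PiM UNIV (\<lambda>_::nat. PiM UNIV (\<lambda>_::nat. \<mu>)). P (C k j)" for k j
    using AE_PiM_component[of UNIV "\<lambda>_. PiM UNIV (\<lambda>_::nat. \<mu>)" k "\<lambda>c. P (c j)"] row by simp
  then show ?thesis
    by (simp add: AE_all_countable)
qed

lemma distr_pair_snd:
  assumes N: "prob_space N" and M: "sigma_finite_measure M"
  shows "distr (N \<Otimes>\<^sub>M M) M snd = M"
proof (intro measure_eqI)
  fix A assume A: "A \<in> sets (distr (N \<Otimes>\<^sub>M M) M snd)"
  then have "emeasure (distr (N \<Otimes>\<^sub>M M) M snd) A = emeasure (N \<Otimes>\<^sub>M M) (space N \<times> A)"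
    by (auto simp: emeasure_distr space_pair_measure dest: sets.sets_into_space
        intro!: arg_cong2[where f=emeasure])
  with A show "emeasure (distr (N \<Otimes>\<^sub>M M) M snd) A = emeasure M A"
    by (simp add: sigma_finite_measure.emeasure_pair_measure_Times[OF M] prob_space.emeasure_space_1[OF N])
qed simp

lemma AE_pair_measure_fst_snd:
  assumes M1: "prob_space M1" and M2: "prob_space M2"
    and "AE x in M1. P x" "AE y in M2. Q y"
  shows "AE \<omega> in M1 \<Otimes>\<^sub>M M2. P (fst \<omega>) \<and> Q (snd \<omega>)"
proof -
  have "AE x in distr (M1 \<Otimes>\<^sub>M M2) M1 fst. P x"
    by (subst prob_space.distr_pair_fst[OF M2]) (rule assms(3))
  moreover have "AE y in distr (M1 \<Otimes>\<^sub>M M2) M2 snd. Q y"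
    by (subst distr_pair_snd[OF M1 prob_space_imp_sigma_finite[OF M2]]) (rule assms(4))
  ultimately have "AE \<omega> in M1 \<Otimes>\<^sub>M M2. P (fst \<omega>)" "AE \<omega> in M1 \<Otimes>\<^sub>M M2. Q (snd \<omega>)"
    by (auto dest: AE_distrD[OF measurable_fst] AE_distrD[OF measurable_snd])
  then show ?thesis
    by eventually_elim simp
qed

lemma maximizers_nonempty:
  assumes "1 \<le> \<kappa> k"
  shows "maximizers \<kappa> \<Phi> C k Z \<noteq> {}"
proof -
  obtain j where "j < \<kappa> k" "\<forall>i<\<kappa> k. \<Phi> (C k i) Z \<le> \<Phi> (C k j) Z"
    using ex_is_arg_min_if_finite[of "{..<\<kappa> k}" "\<lambda>i. - \<Phi> (C k i) Z"] assms
    by (fastforce simp: is_arg_min_linorder)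
  then show ?thesis
    unfolding maximizers_def by blast
qed

lemma finite_maximizers: "finite (maximizers \<kappa> \<Phi> C k Z)"
  unfolding maximizers_def by auto

lemma finite_Zset: "finite (Zset \<kappa> \<Phi> C T n)"
  by (simp add: Zset_def)

lemma Zset_mono: "n \<le> n' \<Longrightarrow> Zset \<kappa> \<Phi> C T n \<subseteq> Zset \<kappa> \<Phi> C T n'"
  by (induction n' rule: dec_induct) (auto simp: Zset_def)

lemma Zset_subset_candidates: "Zset \<kappa> \<Phi> C T n \<subseteq> (\<Union>k. range (C k))"
proof (induction n)
  case (Suc n)
  then show ?case
    unfolding Zset_def by simp blast
qed (simp add: Zset_def)

lemma Zset_Suc:
  assumes "1 \<le> \<kappa> (Suc n)" "0 \<le> T (Suc n) 0" "T (Suc n) 0 < 1"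
  shows "\<exists>j<\<kappa> (Suc n). Zset \<kappa> \<Phi> C T (Suc n) = insert (C (Suc n) j) (Zset \<kappa> \<Phi> C T n)"
proof -
  let ?A = "maximizers \<kappa> \<Phi> C (Suc n) (set (Zlist \<kappa> \<Phi> C T n))"
  have "unif_pick ?A (T (Suc n) 0) \<in> ?A"
    using assms by (intro unif_pick_in finite_maximizers maximizers_nonempty)
  then have "unif_pick ?A (T (Suc n) 0) < \<kappa> (Suc n)"
    unfolding maximizers_def by simp
  then show ?thesis
    unfolding Zset_def by (intro exI[of _ "unif_pick ?A (T (Suc n) 0)"]) simp
qed

lemma nn_family_nonempty:
  assumes "finite S" "k \<le> card S"
  shows "nn_family k S x \<noteq> {}"
  using assms(2)
proof (induction k)
  case 0
  have "{} \<in> nn_family 0 S x" unfolding nn_family_def by simp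
  then show ?case by blast
next
  case (Suc k)
  then obtain U where U: "U \<subseteq> S" "card U = k" "\<forall>u\<in>U. \<forall>s\<in>S - U. dist x u \<le> dist x s"
    unfolding nn_family_def by auto
  have "finite U" using U(1) assms(1) by (rule finite_subset)
  have "S - U \<noteq> {}"
    using card_mono[OF \<open>finite U\<close>, of S] U(2) Suc.prems by auto
  then obtain s where s: "is_arg_min (dist x) (\<lambda>s. s \<in> S - U) s"
    using ex_is_arg_min_if_finite[of "S - U" "dist x"] assms(1) by auto
  then have "insert s U \<in> nn_family (Suc k) S x"
    using U \<open>finite U\<close> unfolding nn_family_def is_arg_min_linorder by auto
  then show ?case by blast
qed

lemma finite_nn_family: "finite S \<Longrightarrow> finite (nn_family k S x)"
  unfolding nn_family_def by (rule finite_subset[of _ "Pow S"]) auto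

lemma nn_worst_nonempty:
  assumes "finite S" "k \<le> card S"
  shows "nn_worst k f S x \<noteq> {}"
proof -
  obtain U where "is_arg_min (modefreq f) (\<lambda>U. U \<in> nn_family k S x) U"
    using ex_is_arg_min_if_finite[of "nn_family k S x" "modefreq f"]
      finite_nn_family nn_family_nonempty assms by blast
  then show ?thesis
    unfolding nn_worst_def is_arg_min_linorder by blast
qed

lemma finite_nn_worst: "finite S \<Longrightarrow> finite (nn_worst k f S x)"
  unfolding nn_worst_def by (rule finite_subset[OF _ finite_nn_family]) auto

lemma nn_family_subset_ball:
  assumes U: "U \<in> nn_family m S x" and "finite S" and m: "m \<le> card (S \<inter> ball x \<epsilon>)"
  shows "U \<subseteq> ball x \<epsilon>"
proof
  fix u assume u: "u \<in> U"
  have U_nn: "U \<subseteq> S" "card U = m" "\<forall>u\<in>U. \<forall>s\<in>S - U. dist x u \<le> dist x s"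
    using U unfolding nn_family_def by auto
  show "u \<in> ball x \<epsilon>"
  proof (rule ccontr)
    assume "u \<notin> ball x \<epsilon>"
    then have "card (U \<inter> ball x \<epsilon>) < card U"
      using u U_nn(1) \<open>finite S\<close> by (intro psubset_card_mono) (auto intro: finite_subset)
    have "\<not> S \<inter> ball x \<epsilon> \<subseteq> U"
    proof
      assume "S \<inter> ball x \<epsilon> \<subseteq> U"
      then have "card (S \<inter> ball x \<epsilon>) \<le> card (U \<inter> ball x \<epsilon>)"
        using U_nn(1) \<open>finite S\<close> by (intro card_mono) (auto intro: finite_subset)
      with \<open>card (U \<inter> ball x \<epsilon>) < card U\<close> U_nn(2) m show False
        by linarith
    qed
    then obtain s where "s \<in> S \<inter> ball x \<epsilon>" "s \<notin> U" by blast
    then show False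
      using U_nn(3) u \<open>u \<notin> ball x \<epsilon>\<close> by force
  qed
qed

lemma mode_f_const:
  assumes "finite A" "A \<noteq> {}" "\<forall>a\<in>A. f a = c" "0 \<le> v" "v < 1"
  shows "mode_f f A v = c"
proof -
  have "f ` A = {c}" using assms(2,3) by auto
  then have "modes f A = {c}" unfolding modes_def modefreq_def by auto
  then show ?thesis
    unfolding mode_f_def using unif_pick_in[of "{c}" v] assms(4,5) by auto
qed

lemma mode_U_nn_eq:
  assumes "finite S" "0 < m" "0 \<le> v" "v < 1" "0 \<le> w" "w < 1"
    and label: "\<forall>s\<in>S \<inter> ball x \<epsilon>. f s = f x"
    and many: "x \<in> S \<or> m < card (S \<inter> ball x \<epsilon>)"
  shows "mode_f f (U_nn m f S x v) w = f x"
proof (cases "x \<in> S")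
  case True
  then show ?thesis
    unfolding U_nn_def using mode_f_const[of "{x}" f "f x" w] assms(5,6) by simp
next
  case False
  have "card (S \<inter> ball x \<epsilon>) \<le> card S"
    using \<open>finite S\<close> by (intro card_mono) auto
  then have "m < card S" using many False by simp
  let ?U = "unif_pick (nn_worst m f S x) v"
  have "?U \<in> nn_worst m f S x"
    using assms(1,3,4) \<open>m < card S\<close>
    by (intro unif_pick_in finite_nn_worst nn_worst_nonempty) auto
  then have U: "?U \<in> nn_family m S x"
    unfolding nn_worst_def by simp
  then have "?U \<subseteq> S \<inter> ball x \<epsilon>"
    using nn_family_subset_ball[OF U \<open>finite S\<close>] many False
    unfolding nn_family_def by auto
  moreover have "finite ?U" "?U \<noteq> {}"
    using U \<open>0 < m\<close> unfolding nn_family_def by (auto intro: card_ge_0_finite)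
  ultimately have "mode_f f ?U w = f x"
    using label assms(5,6) by (intro mode_f_const) auto
  then show ?thesis
    unfolding U_nn_def using False \<open>m < card S\<close> by simp
qed

lemma Zset_gains_near_point:
  assumes \<kappa>: "\<forall>n\<ge>1. 1 \<le> \<kappa> n" and T: "\<forall>k j. 0 \<le> T k j \<and> T k j < 1"
    and near: "\<forall>\<delta>>0. \<exists>\<^sub>F k in sequentially. \<forall>j<\<kappa> k. C k j \<in> ball x \<delta>"
    and "0 < \<epsilon>" and x: "x \<notin> Zset \<kappa> \<Phi> C T n"
  shows "\<exists>n'. card (Zset \<kappa> \<Phi> C T n \<inter> ball x \<epsilon>) < card (Zset \<kappa> \<Phi> C T n' \<inter> ball x \<epsilon>)"
proof -
  let ?S = "Zset \<kappa> \<Phi> C T"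
  \<comment> \<open>every point of a batch inside \<open>ball x \<delta>\<close> is new and lies in \<open>ball x \<epsilon>\<close>\<close>
  define \<delta> where "\<delta> = Min (insert \<epsilon> (dist x ` ?S n))"
  have "0 < \<delta>"
    unfolding \<delta>_def using \<open>0 < \<epsilon>\<close> x by (auto simp: finite_Zset)
  have \<delta>_le: "\<delta> \<le> \<epsilon>" "\<And>s. s \<in> ?S n \<Longrightarrow> \<delta> \<le> dist x s"
    unfolding \<delta>_def by (simp_all add: finite_Zset)
  obtain k where k: "Suc n \<le> k" "\<forall>j<\<kappa> k. C k j \<in> ball x \<delta>"
    using near \<open>0 < \<delta>\<close> unfolding frequently_sequentially by blast
  then obtain k' where k': "k = Suc k'" "n \<le> k'"
    by (cases k) auto
  obtain j where j: "j < \<kappa> k" "?S k = insert (C k j) (?S k')"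
    using Zset_Suc[of \<kappa> k' T \<Phi> C] \<kappa> T k' by auto
  have "dist x (C k j) < \<delta>"
    using k(2) j(1) by simp
  then have "C k j \<notin> ?S n" "C k j \<in> ball x \<epsilon>"
    using \<delta>_le by (meson leD, simp)
  moreover have "?S n \<subseteq> ?S k'"
    by (rule Zset_mono[OF k'(2)])
  ultimately have "?S n \<inter> ball x \<epsilon> \<subset> ?S k \<inter> ball x \<epsilon>"
    using j(2) by blast
  then have "card (?S n \<inter> ball x \<epsilon>) < card (?S k \<inter> ball x \<epsilon>)"
    by (rule psubset_card_mono[rotated]) (simp add: finite_Zset)
  then show ?thesis by blast
qed

lemma Zset_many_near_point:
  assumes "\<forall>n\<ge>1. 1 \<le> \<kappa> n" "\<forall>k j. 0 \<le> T k j \<and> T k j < 1"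
    and "\<forall>\<delta>>0. \<exists>\<^sub>F k in sequentially. \<forall>j<\<kappa> k. C k j \<in> ball x \<delta>"
    and "0 < \<epsilon>"
  shows "\<exists>n. x \<in> Zset \<kappa> \<Phi> C T n \<or> i \<le> card (Zset \<kappa> \<Phi> C T n \<inter> ball x \<epsilon>)"
proof (induction i)
  case (Suc i)
  then obtain n where n: "x \<in> Zset \<kappa> \<Phi> C T n \<or> i \<le> card (Zset \<kappa> \<Phi> C T n \<inter> ball x \<epsilon>)"
    by blast
  show ?case
  proof (cases "x \<in> Zset \<kappa> \<Phi> C T n")
    case False
    then obtain n' where
      "card (Zset \<kappa> \<Phi> C T n \<inter> ball x \<epsilon>) < card (Zset \<kappa> \<Phi> C T n' \<inter> ball x \<epsilon>)"
      using Zset_gains_near_point[OF assms] by blast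
    with n False show ?thesis
      by (intro exI[of _ n']) simp
  qed blast
qed simp

lemma zeta_nn_eventually_eq:
  fixes C :: "nat \<Rightarrow> nat \<Rightarrow> 'a::metric_space"
  assumes \<kappa>: "\<forall>n\<ge>1. 1 \<le> \<kappa> n" and T: "\<forall>k j. 0 \<le> T k j \<and> T k j < 1"
    and near: "\<forall>\<delta>>0. \<exists>\<^sub>F k in sequentially. \<forall>j<\<kappa> k. C k j \<in> ball x \<delta>"
    and "0 < \<epsilon>" "0 < m"
    and label: "\<forall>k j. C k j \<in> ball x \<epsilon> \<longrightarrow> f (C k j) = f x"
  shows "\<forall>\<^sub>F n in sequentially. zeta_nn m f \<kappa> \<Phi> n x (C, T) = f x"
proof -
  obtain n0 where n0: "x \<in> Zset \<kappa> \<Phi> C T n0 \<or> Suc m \<le> card (Zset \<kappa> \<Phi> C T n0 \<inter> ball x \<epsilon>)"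
    using Zset_many_near_point[OF \<kappa> T near \<open>0 < \<epsilon>\<close>] by blast
  have "zeta_nn m f \<kappa> \<Phi> n x (C, T) = f x" if "n0 \<le> n" for n
  proof -
    let ?S = "Zset \<kappa> \<Phi> C T n"
    have sub: "Zset \<kappa> \<Phi> C T n0 \<subseteq> ?S"
      by (rule Zset_mono[OF that])
    then have "card (Zset \<kappa> \<Phi> C T n0 \<inter> ball x \<epsilon>) \<le> card (?S \<inter> ball x \<epsilon>)"
      by (intro card_mono) (auto simp: finite_Zset)
    then have "x \<in> ?S \<or> m < card (?S \<inter> ball x \<epsilon>)"
      using n0 sub by auto
    moreover have "\<forall>s\<in>?S \<inter> ball x \<epsilon>. f s = f x"
      using Zset_subset_candidates[of \<kappa> \<Phi> C T n] label by blast
    ultimately show ?thesis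
      unfolding zeta_nn_def Let_def using T \<open>0 < m\<close> by (simp add: mode_U_nn_eq finite_Zset)
  qed
  then show ?thesis
    unfolding eventually_sequentially by blast
qed

lemma AE_frequently_batch_near:
  fixes \<mu> :: "'a::metric_space measure" and \<kappa> :: "nat \<Rightarrow> nat"
  assumes \<mu>: "prob_space \<mu>" and borel: "sets \<mu> = sets borel" and "in_supp \<mu> x"
    and diverges: "\<forall>\<rho>::real. 0 < \<rho> \<and> \<rho> \<le> 1 \<longrightarrow> \<not> summable (\<lambda>n. \<rho> ^ \<kappa> n)"
  shows "AE C in PiM UNIV (\<lambda>_::nat. PiM UNIV (\<lambda>_::nat. \<mu>)).
           \<forall>\<delta>>0. \<exists>\<^sub>F k in sequentially. \<forall>j<\<kappa> k. C k j \<in> ball x \<delta>"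
proof -
  have "AE C in PiM UNIV (\<lambda>_::nat. PiM UNIV (\<lambda>_::nat. \<mu>)).
          \<exists>\<^sub>F k in sequentially. \<forall>j<\<kappa> k. C k j \<in> ball x (1 / Suc q)" for q
  proof (rule AE_frequently_batch_in[OF \<mu>])
    show "ball x (1 / Suc q) \<in> sets \<mu>"
      using borel by simp
    have "0 < measure \<mu> (ball x (1 / Suc q))"
      using \<open>in_supp \<mu> x\<close> unfolding in_supp_def by simp
    then show "\<not> summable (\<lambda>k. measure \<mu> (ball x (1 / Suc q)) ^ \<kappa> k)"
      using diverges prob_space.prob_le_1[OF \<mu>] by blast
  qed
  then have "AE C in PiM UNIV (\<lambda>_::nat. PiM UNIV (\<lambda>_::nat. \<mu>)).
          \<forall>q. \<exists>\<^sub>F k in sequentially. \<forall>j<\<kappa> k. C k j \<in> ball x (1 / Suc q)"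
    by (simp add: AE_all_countable)
  then show ?thesis
  proof eventually_elim
    case (elim C)
    show ?case
    proof (intro allI impI)
      fix \<delta> :: real assume "0 < \<delta>"
      then obtain q where "1 / Suc q < \<delta>"
        by (rule nat_approx_posE)
      then show "\<exists>\<^sub>F k in sequentially. \<forall>j<\<kappa> k. C k j \<in> ball x \<delta>"
        using elim[rule_format, of q] by (elim frequently_elim1) auto
    qed
  qed
qed

lemma AE_label_near_not_f_boundary:
  fixes \<mu> :: "'a::metric_space measure"
  assumes \<mu>: "prob_space \<mu>" and borel: "sets \<mu> = sets borel"
    and f: "f \<in> measurable \<mu> (count_space UNIV)" and "\<not> is_f_boundary \<mu> f x"
  obtains \<epsilon> where "0 < \<epsilon>" "AE y in \<mu>. y \<in> ball x \<epsilon> \<longrightarrow> f y = f x"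
proof -
  interpret prob_space \<mu> by (rule \<mu>)
  obtain \<epsilon> where "0 < \<epsilon>" and small: "measure \<mu> (ball x \<epsilon> - f -` {f x}) \<le> 0"
    using \<open>\<not> is_f_boundary \<mu> f x\<close> unfolding is_f_boundary_def by (auto simp: not_less)
  have "f -` {f x} \<in> sets \<mu>"
    using measurable_sets[OF f, of "{f x}"] sets_eq_imp_space_eq[OF borel] by simp
  then have "ball x \<epsilon> - f -` {f x} \<in> null_sets \<mu>"
    using small borel by (simp add: measure_le_0_iff null_sets_def emeasure_eq_measure)
  then have "AE y in \<mu>. y \<in> ball x \<epsilon> \<longrightarrow> f y = f x"
    by (rule AE_I') auto
  with \<open>0 < \<epsilon>\<close> show ?thesis by (rule that)
qed

theorem mainTheorem11:
  fixes \<mu> :: "'a::metric_space measure"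
    and f :: "'a \<Rightarrow> 'b"
    and \<kappa> :: "nat \<Rightarrow> nat"
    and m :: nat
    and x :: 'a
  assumes "prob_space \<mu>"
    and "sets \<mu> = sets borel"
    and "countable (UNIV :: 'b set)"
    and "f \<in> measurable \<mu> (count_space UNIV)"
    and "m > 1"
    and "\<forall>n\<ge>1. \<kappa> n \<ge> 1"
    and "\<forall>\<rho>::real. 0 < \<rho> \<and> \<rho> \<le> 1 \<longrightarrow> \<not> summable (\<lambda>n. \<rho> ^ \<kappa> n)"
    and "in_supp \<mu> x"
    and "\<not> is_f_boundary \<mu> f x"
  shows "AE \<omega> in sample_space \<mu>.
           eventually (\<lambda>n. zeta_nn m f \<kappa> infdist n x \<omega> = f x) sequentially"
proof -
  obtain \<epsilon> where "0 < \<epsilon>" and label: "AE y in \<mu>. y \<in> ball x \<epsilon> \<longrightarrow> f y = f x"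
    using AE_label_near_not_f_boundary assms(1,2,4,9) by blast
  let ?C = "PiM UNIV (\<lambda>_::nat. PiM UNIV (\<lambda>_::nat. \<mu>))"
  let ?T = "PiM UNIV (\<lambda>_::nat. PiM UNIV (\<lambda>_::nat. unif01))"
  have candidates: "AE C in ?C. (\<forall>k j. C k j \<in> ball x \<epsilon> \<longrightarrow> f (C k j) = f x)
      \<and> (\<forall>\<delta>>0. \<exists>\<^sub>F k in sequentially. \<forall>j<\<kappa> k. C k j \<in> ball x \<delta>)"
    using AE_PiM_PiM_all[OF assms(1) label] AE_frequently_batch_near[OF assms(1,2,8,7)]
    by eventually_elim blast
  have ties: "AE T in ?T. \<forall>k j. 0 \<le> T k j \<and> T k j < 1"
    by (rule AE_PiM_PiM_all[OF prob_space_unif01 AE_unif01])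
  have "prob_space ?C" "prob_space ?T"
    by (intro prob_space_PiM assms(1) prob_space_unif01)+
  from AE_pair_measure_fst_snd[OF this candidates ties]
  show ?thesis
    unfolding sample_space_def
  proof eventually_elim
    case (elim \<omega>)
    then have "\<forall>\<^sub>F n in sequentially. zeta_nn m f \<kappa> infdist n x (fst \<omega>, snd \<omega>) = f x"
      using assms(5,6) \<open>0 < \<epsilon>\<close> by (intro zeta_nn_eventually_eq) auto
    then show ?case by simp
  qed
qed

end
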